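(* Let $(D,\chi)$ be a shaped oriented link diagram with flattening $\mathfrak f$, and let $c$ be a crossing of $D$ of sign $\epsilon$, with local parameters $\mu_1,\mu_2$ (of the strands through $1$ and $2$), $\beta_1,\beta_2,\beta_{1'},\beta_{2'}$, $\gamma_N,\gamma_W,\gamma_S,\gamma_E$. If one of these local parameters $x$ is replaced by $x+k$ with $k\in\mathbb Z$ (all others unchanged), then $\mathcal V(c,\mathfrak f)$ changes by $2\pi^2 i\,k$ times the corresponding coefficient below (modulo $2\pi^2 i\mathbb Z$): \[ \begin{aligned} \mu_1&:\ -\epsilon(\beta_{1'}-\beta_1)+\gamma_W-\gamma_S, & \mu_2&:\ \epsilon(\beta_{2'}-\beta_2)+\gamma_S-\gamma_E,\\ \beta_1&:\ \gamma_W-\gamma_N-\epsilon\mu_1, & \beta_2&:\ \gamma_S-\gamma_W+\epsilon\mu_2,\\ \beta_{1'}&:\ \gamma_E-\gamma_S+\epsilon\mu_1, & \beta_{2'}&:\ \gamma_N-\gamma_E-\epsilon\mu_2,\\ \gamma_N&:\ \beta_1-\beta_{2'}, & \gamma_W&:\ \beta_2-\beta_1-\mu_1,\\ \gamma_S&:\ \beta_{1'}+\mu_1-\beta_2-\mu_2, & \gamma_E&:\ \beta_{2'}+\mu_2-\beta_{1'}. \end{aligned} \]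
   Context: Oriented link diagram $D$; segments are edges of its underlying $4$-valent planar graph, regions are components of the complement. At each crossing, rotate so both strands point right; label incoming upper-left segment $1$, incoming lower-left segment $2$, outgoing lower-right $1'$ (continuation of $1$), outgoing upper-right $2'$ (continuation of $2$); regions $N$ (top), $S$ (bottom), $W$ (left), $E$ (right); $\epsilon=\pm1$ the crossing sign. A shaping assigns $\chi_i=(a_i,b_i,m_i)\in(\mathbb C^\times)^3$ to segments with, at each crossing, $m_{1'}=m_1,m_{2'}=m_2$ and (positive) $A=1-\frac{m_1b_1}{b_2}(1-\frac{a_1}{m_1})(1-\frac{1}{m_2a_2})$, $a_{1'}=a_1/A$, $a_{2'}=a_2A$, $b_{1'}=\frac{m_2b_2}{m_1}(1-m_2a_2(1-\frac{b_2}{m_1b_1}))^{-1}$, $b_{2'}=b_1(1-\frac{m_1}{a_1}(1-\frac{b_2}{m_1b_1}))$, or (negative) $\tilde A=1-\frac{b_2}{m_1b_1}(1-m_1a_1)(1-\frac{m_2}{a_2})$, $a_{1'}=a_1/\tilde A$, $a_{2'}=a_2\tilde A$, $b_{1'}=\frac{m_2b_2}{m_1}(1-\frac{a_2}{m_2}(1-\frac{m_1b_1}{b_2}))$, $b_{2'}=b_1(1-\frac{1}{m_1a_1}(1-\frac{m_1b_1}{b_2}))^{-1}$, all finite nonzero. Pinched: $b_{2'}=b_1$. Flattening: $\mu_j$ per component ($e^{2\pi i\mu_j}=m_j$), $\beta_k$ per segment ($e^{2\pi i\beta_k}=b_k$), $\gamma_R$ per region ($e^{2\pi i(\gamma_{R'}-\gamma_R)}=a_k$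 when $R',R$ lie right, left of segment $k$), $\kappa$ at each non-pinched crossing with $e^{2\pi i\kappa}=e^{2\pi i\gamma_N}/(1-(b_{2'}/b_1)^\epsilon)$. Lifted dilogarithm: for $w=e^{\zeta^0}\ne1$, $e^{\zeta^1}(1-w)=1$, $p^0=(\zeta^0-\operatorname{Log}w)/2\pi i$, $p^1=(\zeta^1+\operatorname{Log}(1-w))/2\pi i$, $\mathcal L(\zeta^0,\zeta^1)=\operatorname{Li}_2(w)+\frac12\operatorname{Log}w\operatorname{Log}(1-w)-\frac{\pi^2}6+\pi i(p^0\operatorname{Log}(1-w)+p^1\operatorname{Log}w)\in\mathbb C/2\pi^2\mathbb Z$ (continuous extension understood). Non-pinched crossing: $\zeta_N^0=2\pi i\epsilon(\beta_{2'}-\beta_1)$, $\zeta_N^1=2\pi i(\kappa-\gamma_N)$; $\zeta_W^0=2\pi i\epsilon(\beta_2-\beta_1-\mu_1)$, $\zeta_W^1=2\pi i(\kappa-\gamma_W+\epsilon\mu_1)$; $\zeta_S^0=2\pi i\epsilon(\beta_2-\beta_{1'}+\mu_2-\mu_1)$, $\zeta_S^1=2\pi i(\kappa-\gamma_S+\epsilon(\mu_1-\mu_2))$; $\zeta_E^0=2\pi i\epsilon(\beta_{2'}-\beta_{1'}+\mu_2)$, $\zeta_E^1=2\pi i(\kappa-\gamma_E-\epsilon\mu_2)$; $\mathcal V(c,\mathfrak f)=-i\epsilon[\mathcal L(\zeta_N^0,\zeta_N^1)-\mathcal L(\zeta_W^0,\zeta_W^1)+\mathcal L(\zeta_S^0,\zeta_S^1)-\mathcal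 L(\zeta_E^0,\zeta_E^1)]\in\mathbb C/2\pi^2 i\mathbb Z$. Pinched crossing: $\mathcal V(c,\mathfrak f)=2\pi^2 i[\beta_1(\gamma_W-\gamma_N)-\beta_{1'}(\gamma_S-\gamma_E)+\beta_2(\gamma_S-\gamma_W)-\beta_{2'}(\gamma_E-\gamma_N)-\mu_1(\epsilon(\beta_1-\beta_{1'}+\mu_2)+\gamma_S-\gamma_W)-\mu_2(\epsilon(\beta_{2'}-\beta_2+\mu_1)+\gamma_E-\gamma_S)]$. *)

theory Defs
  imports "HOL-Analysis.Analysis"
begin

text \<open>It is analytic on the complement of the ray [1,oo); on that ray it takes the
  boundary value obtained from the side Im w < 0.\<close>
definition Li2 :: "complex \<Rightarrow> complex" where
  "Li2 w = - integral {0..1::real} (\<lambda>s. Ln (1 - of_real s * w) / of_real s)"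

text \<open>Lifted dilogarithm L(zeta0, zeta1), a representative in C (the paper's value is its
  class in C modulo 2 pi^2 Z).  Here w = exp zeta0.\<close>
definition Lcal :: "complex \<Rightarrow> complex \<Rightarrow> complex" where
  "Lcal z0 z1 =
     (let w = exp z0;
          p0 = (z0 - Ln w) / (2 * of_real pi * \<i>);
          p1 = (z1 + Ln (1 - w)) / (2 * of_real pi * \<i>)
      in Li2 w + Ln w * Ln (1 - w) / 2 - of_real (pi^2) / 6
         + of_real pi * \<i> * (p0 * Ln (1 - w) + p1 * Ln w))"

text \<open>Shape parameters on the four segments 1, 2, 1', 2' at the crossing
  (primes written as suffix p), together with the meridian parameters m1 = m1', m2 = m2'.\<close>
record shape_loc =
  a1 :: complex  a2 :: complex  a1p :: complex  a2p :: complex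
  b1 :: complex  b2 :: complex  b1p :: complex  b2p :: complex
  m1 :: complex  m2 :: complex

record flat_loc =
  mu1 :: complex  mu2 :: complex
  beta1 :: complex  beta2 :: complex  beta1p :: complex  beta2p :: complex
  gN :: complex  gW :: complex  gS :: complex  gE :: complex
  kappa :: complex

definition pinched :: "shape_loc \<Rightarrow> bool" where
  "pinched s \<longleftrightarrow> b2p s = b1 s"

definition shaping_at_crossing :: "int \<Rightarrow> shape_loc \<Rightarrow> bool" where
  "shaping_at_crossing eps s \<longleftrightarrow>
     (eps = 1 \<or> eps = -1) \<and>
     a1 s \<noteq> 0 \<and> a2 s \<noteq> 0 \<and> a1p s \<noteq> 0 \<and> a2p s \<noteq> 0 \<and>
     b1 s \<noteq> 0 \<and> b2 s \<noteq> 0 \<and> b1p s \<noteq> 0 \<and> b2p s \<noteq> 0 \<and>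
     m1 s \<noteq> 0 \<and> m2 s \<noteq> 0 \<and>
     (eps = 1 \<longrightarrow>
        (let A = 1 - m1 s * b1 s / b2 s * (1 - a1 s / m1 s) * (1 - 1 / (m2 s * a2 s));
             D = 1 - m2 s * a2 s * (1 - b2 s / (m1 s * b1 s))
         in A \<noteq> 0 \<and> D \<noteq> 0 \<and>
            a1p s = a1 s / A \<and> a2p s = a2 s * A \<and>
            b1p s = m2 s * b2 s / m1 s / D \<and>
            b2p s = b1 s * (1 - m1 s / a1 s * (1 - b2 s / (m1 s * b1 s))))) \<and>
     (eps = -1 \<longrightarrow>
        (let At = 1 - b2 s / (m1 s * b1 s) * (1 - m1 s * a1 s) * (1 - m2 s / a2 s);
             D = 1 - 1 / (m1 s * a1 s) * (1 - m1 s * b1 s / b2 s)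
         in At \<noteq> 0 \<and> D \<noteq> 0 \<and>
            a1p s = a1 s / At \<and> a2p s = a2 s * At \<and>
            b1p s = m2 s * b2 s / m1 s * (1 - a2 s / m2 s * (1 - m1 s * b1 s / b2 s)) \<and>
            b2p s = b1 s / D))"

abbreviation e2pi :: "complex \<Rightarrow> complex" where
  "e2pi x \<equiv> exp (2 * of_real pi * \<i> * x)"

text \<open>Flattening conditions at the crossing.  With both strands pointing right:
  segment 1 has N on its left and W on its right, 2 has W left / S right,
  1' has E left / S right, 2' has N left / E right.\<close>
definition flattening_at_crossing :: "int \<Rightarrow> shape_loc \<Rightarrow> flat_loc \<Rightarrow> bool" where
  "flattening_at_crossing eps s f \<longleftrightarrow>
     e2pi (mu1 f) = m1 s \<and> e2pi (mu2 f) = m2 s \<and>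
     e2pi (beta1 f) = b1 s \<and> e2pi (beta2 f) = b2 s \<and>
     e2pi (beta1p f) = b1p s \<and> e2pi (beta2p f) = b2p s \<and>
     e2pi (gW f - gN f) = a1 s \<and> e2pi (gS f - gW f) = a2 s \<and>
     e2pi (gS f - gE f) = a1p s \<and> e2pi (gE f - gN f) = a2p s \<and>
     (\<not> pinched s \<longrightarrow>
        e2pi (kappa f) = e2pi (gN f) / (1 - (b2p s / b1 s) powi eps))"

text \<open>The crossing contribution V(c, f), as a representative in C
  (the paper's value is its class modulo 2 pi^2 i Z).\<close>
definition Vcross :: "int \<Rightarrow> shape_loc \<Rightarrow> flat_loc \<Rightarrow> complex" where
  "Vcross eps s f =
    (let e = of_int eps :: complex; t = 2 * of_real pi * \<i>;
         M1 = mu1 f; M2 = mu2 f; B1 = beta1 f; B2 = beta2 f; B1p = beta1p f; B2p = beta2p f;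
         N = gN f; W = gW f; S = gS f; E = gE f; K = kappa f
     in if pinched s then
          2 * of_real (pi^2) * \<i> *
            (B1 * (W - N) - B1p * (S - E) + B2 * (S - W) - B2p * (E - N)
             - M1 * (e * (B1 - B1p + M2) + S - W)
             - M2 * (e * (B2p - B2 + M1) + E - S))
        else
          - \<i> * e *
            (Lcal (t * e * (B2p - B1)) (t * (K - N))
             - Lcal (t * e * (B2 - B1 - M1)) (t * (K - W + e * M1))
             + Lcal (t * e * (B2 - B1p + M2 - M1)) (t * (K - S + e * (M1 - M2)))
             - Lcal (t * e * (B2p - B1p + M2)) (t * (K - E - e * M2))))"

definition cong_2pi2i :: "complex \<Rightarrow> complex \<Rightarrow> bool" where
  "cong_2pi2i x y \<longleftrightarrow> (\<exists>n::int. x - y = 2 * of_real (pi^2) * \<i> * of_int n)"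

end

theory Submission
  imports Defs
begin

(* At a non-pinched crossing write zeta_R = 2 pi i theta_R (R = N, W, S, E).  After
   exponentiation the shaping equations say exactly that e^(zeta_R^1) (1 - e^(zeta_R^0)) = 1,
   and translating a flattening parameter by an integer moves every theta_R by integers.  The
   lifted dilogarithm is quasi-periodic under such moves,
     L(zeta^0 + 2 pi i a, zeta^1 + 2 pi i b) = L(zeta^0, zeta^1) + pi i (b zeta^0 - a zeta^1)
   modulo 2 pi^2 Z, since p^0 and p^1 shift by a and b while w does not change; summing the
   four corrections with the signs of V gives the coefficients.
   At a pinched crossing the shaping equations force b_2 = m_1 b_1 and b_1' = m_2 b_1, so
   beta_2' - beta_1, beta_2 - beta_1 - mu_1 and beta_1' - beta_1 - mu_2 are integers; V is
   2 pi^2 i times a quadratic polynomial whose increment differs from the stated one by an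
   integer once these relations are substituted. *)

lemma cong_2pi2i_iff_Ints: "cong_2pi2i x y \<longleftrightarrow> (x - y) / (2 * of_real (pi^2) * \<i>) \<in> \<int>"
  unfolding cong_2pi2i_def by (auto elim!: Ints_cases simp: field_simps)

lemma e2pi_add: "e2pi (x + y) = e2pi x * e2pi y"
  by (simp add: distrib_left exp_add)

lemma e2pi_diff: "e2pi (x - y) = e2pi x / e2pi y"
  by (simp add: right_diff_distrib exp_diff)

lemma e2pi_of_int_mult: "e2pi (of_int n * x) = e2pi x powi n"
  by (simp add: exp_power_int mult.left_commute)

lemma e2pi_eq_iff_Ints: "e2pi x = e2pi y \<longleftrightarrow> x - y \<in> \<int>"
proof -
  have "2 * of_real pi * \<i> * x = 2 * of_real pi * \<i> * y + of_int (2 * n) * pi * \<i>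
      \<longleftrightarrow> x = y + of_int n" for n :: int
  proof -
    have "2 * of_real pi * \<i> * x = 2 * of_real pi * \<i> * y + of_int (2 * n) * pi * \<i>
        \<longleftrightarrow> 2 * of_real pi * \<i> * x = 2 * of_real pi * \<i> * (y + of_int n)"
      by (simp add: algebra_simps)
    then show ?thesis by simp
  qed
  then have "e2pi x = e2pi y \<longleftrightarrow> (\<exists>n::int. x = y + of_int n)"
    unfolding exp_eq by simp
  also have "\<dots> \<longleftrightarrow> x - y \<in> \<int>"
    by (metis Ints_cases Ints_of_int add_diff_cancel_left' diff_add_cancel add.commute)
  finally show ?thesis .
qed

lemma Lcal_translate:
  assumes rel: "e2pi t1 * (1 - e2pi t0) = 1"
    and a: "t0' - t0 \<in> \<int>" and b: "t1' - t1 \<in> \<int>"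
  shows "(Lcal (2 * of_real pi * \<i> * t0') (2 * of_real pi * \<i> * t1')
          - Lcal (2 * of_real pi * \<i> * t0) (2 * of_real pi * \<i> * t1)) / of_real (2 * pi^2)
         + ((t1' - t1) * t0 - (t0' - t0) * t1) \<in> \<int>"
proof -
  define T where "T = 2 * of_real pi * \<i>"
  have "T \<noteq> 0" by (simp add: T_def)
  define w where "w = exp (T * t0)"
  have "w \<noteq> 0" "1 - w \<noteq> 0" using rel by (auto simp: w_def T_def)
  have "exp (T * t0') = w" using a unfolding w_def T_def e2pi_eq_iff_Ints .
  define l0 l1 where "l0 = Ln w / T - t0" and "l1 = Ln (1 - w) / T + t1"
  have "l0 \<in> \<int>"
    using e2pi_eq_iff_Ints[of "Ln w / T" t0] \<open>w \<noteq> 0\<close> \<open>T \<noteq> 0\<close>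
    by (simp add: l0_def w_def T_def)
  have "e2pi (- t1) = 1 - w" using rel by (simp add: exp_minus w_def T_def field_simps)
  then have "l1 \<in> \<int>"
    using e2pi_eq_iff_Ints[of "Ln (1 - w) / T" "- t1"] \<open>1 - w \<noteq> 0\<close> \<open>T \<noteq> 0\<close>
    by (simp add: l1_def T_def)
  have "Lcal (T * t0') (T * t1') - Lcal (T * t0) (T * t1)
      = of_real pi * \<i> * ((t0' - t0) * Ln (1 - w) + (t1' - t1) * Ln w)"
    unfolding Lcal_def Let_def T_def[symmetric] w_def[symmetric] \<open>exp (T * t0') = w\<close>
    using \<open>T \<noteq> 0\<close> by (simp add: field_simps)
  also have "\<dots> = - of_real (2 * pi^2) *
      ((t0' - t0) * l1 + (t1' - t1) * l0 + ((t1' - t1) * t0 - (t0' - t0) * t1))"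
    unfolding l0_def l1_def T_def by (simp add: field_simps power2_eq_square)
  finally show ?thesis
    using a b \<open>l0 \<in> \<int>\<close> \<open>l1 \<in> \<int>\<close> unfolding T_def by simp
qed

lemma shaping_region_identities:
  assumes sh: "shaping_at_crossing eps s" and np: "\<not> pinched s"
  defines "q \<equiv> (b2p s / b1 s) powi eps"
  shows "q \<noteq> 1"
    and "a1 s * (1 - q) = m1 s powi eps * (1 - (b2 s / (b1 s * m1 s)) powi eps)" (is ?W)
    and "a1 s * a2 s * (1 - q) =
           (m1 s / m2 s) powi eps * (1 - (b2 s * m2 s / (b1p s * m1 s)) powi eps)" (is ?S)
    and "a2p s * m2 s powi eps * (1 - q) = 1 - (b2p s * m2 s / b1p s) powi eps" (is ?E)
proof -
  have ne: "a1 s \<noteq> 0" "a2 s \<noteq> 0" "b1 s \<noteq> 0" "b2 s \<noteq> 0" "b1p s \<noteq> 0" "b2p s \<noteq> 0"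
    "m1 s \<noteq> 0" "m2 s \<noteq> 0"
    using sh unfolding shaping_at_crossing_def by auto
  have "b2p s \<noteq> b1 s" using np unfolding pinched_def .
  have "eps = 1 \<or> eps = -1" using sh unfolding shaping_at_crossing_def by auto
  then have "q \<noteq> 1 \<and> ?W \<and> ?S \<and> ?E"
  proof
    assume eps: "eps = 1"
    define A where "A = 1 - m1 s * b1 s / b2 s * (1 - a1 s / m1 s) * (1 - 1 / (m2 s * a2 s))"
    define D where "D = 1 - m2 s * a2 s * (1 - b2 s / (m1 s * b1 s))"
    have rel: "A \<noteq> 0" "D \<noteq> 0" "a2p s = a2 s * A" "b1p s = m2 s * b2 s / m1 s / D"
      "b2p s = b1 s * (1 - m1 s / a1 s * (1 - b2 s / (m1 s * b1 s)))"
      using sh eps unfolding shaping_at_crossing_def A_def D_def Let_def by auto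
    show ?thesis
      unfolding q_def eps power_int_1_right using ne rel(1,2) \<open>b2p s \<noteq> b1 s\<close>
      unfolding rel(3-5) A_def D_def by (simp add: field_simps)
  next
    assume eps: "eps = -1"
    define A where "A = 1 - b2 s / (m1 s * b1 s) * (1 - m1 s * a1 s) * (1 - m2 s / a2 s)"
    define D where "D = 1 - 1 / (m1 s * a1 s) * (1 - m1 s * b1 s / b2 s)"
    have rel: "A \<noteq> 0" "D \<noteq> 0" "a2p s = a2 s * A"
      "b1p s = m2 s * b2 s / m1 s * (1 - a2 s / m2 s * (1 - m1 s * b1 s / b2 s))"
      "b2p s = b1 s / D"
      using sh eps unfolding shaping_at_crossing_def A_def D_def Let_def by auto
    show ?thesis
      unfolding q_def eps power_int_minus power_int_1_right using ne rel(1,2) \<open>b2p s \<noteq> b1 s\<close>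
      unfolding rel(3-5) A_def D_def by (simp add: field_simps)
  qed
  then show "q \<noteq> 1" ?W ?S ?E by auto
qed

datatype region = North | West | South | East

(* theta0 eps f R and theta1 eps f R are the paper's zeta_R^0 and zeta_R^1 divided by 2 pi i. *)
fun theta0 :: "int \<Rightarrow> flat_loc \<Rightarrow> region \<Rightarrow> complex" where
  "theta0 eps f North = of_int eps * (beta2p f - beta1 f)"
| "theta0 eps f West = of_int eps * (beta2 f - beta1 f - mu1 f)"
| "theta0 eps f South = of_int eps * (beta2 f - beta1p f + mu2 f - mu1 f)"
| "theta0 eps f East = of_int eps * (beta2p f - beta1p f + mu2 f)"

fun theta1 :: "int \<Rightarrow> flat_loc \<Rightarrow> region \<Rightarrow> complex" where
  "theta1 eps f North = kappa f - gN f"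
| "theta1 eps f West = kappa f - gW f + of_int eps * mu1 f"
| "theta1 eps f South = kappa f - gS f + of_int eps * (mu1 f - mu2 f)"
| "theta1 eps f East = kappa f - gE f - of_int eps * mu2 f"

abbreviation Lcal_region :: "int \<Rightarrow> flat_loc \<Rightarrow> region \<Rightarrow> complex" where
  "Lcal_region eps f R \<equiv>
     Lcal (2 * of_real pi * \<i> * theta0 eps f R) (2 * of_real pi * \<i> * theta1 eps f R)"

lemma Vcross_not_pinched:
  "\<not> pinched s \<Longrightarrow> Vcross eps s f = - \<i> * of_int eps *
     (Lcal_region eps f North - Lcal_region eps f West
      + Lcal_region eps f South - Lcal_region eps f East)"
  unfolding Vcross_def Let_def by (simp add: mult.assoc)

lemma e2pi_theta:
  assumes sh: "shaping_at_crossing eps s" and fl: "flattening_at_crossing eps s f"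
    and np: "\<not> pinched s"
  defines "q \<equiv> (b2p s / b1 s) powi eps"
  shows "e2pi (theta0 eps f North) = q"
    and "e2pi (theta0 eps f West) = (b2 s / (b1 s * m1 s)) powi eps"
    and "e2pi (theta0 eps f South) = (b2 s * m2 s / (b1p s * m1 s)) powi eps"
    and "e2pi (theta0 eps f East) = (b2p s * m2 s / b1p s) powi eps"
    and "e2pi (theta1 eps f North) = 1 / (1 - q)"
    and "e2pi (theta1 eps f West) = m1 s powi eps / (a1 s * (1 - q))"
    and "e2pi (theta1 eps f South) = (m1 s / m2 s) powi eps / (a1 s * a2 s * (1 - q))"
    and "e2pi (theta1 eps f East) = 1 / (m2 s powi eps * a2p s * (1 - q))"
proof -
  have fl': "e2pi (mu1 f) = m1 s" "e2pi (mu2 f) = m2 s" "e2pi (beta1 f) = b1 s"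
    "e2pi (beta2 f) = b2 s" "e2pi (beta1p f) = b1p s" "e2pi (beta2p f) = b2p s"
    and gamma: "e2pi (gW f - gN f) = a1 s" "e2pi (gS f - gW f) = a2 s" "e2pi (gE f - gN f) = a2p s"
    and kappa: "e2pi (kappa f) = e2pi (gN f) / (1 - q)"
    using fl np unfolding flattening_at_crossing_def q_def by auto
  have "q \<noteq> 1" using shaping_region_identities(1)[OF sh np] unfolding q_def .
  have "a1 s \<noteq> 0" "a2 s \<noteq> 0" "a2p s \<noteq> 0" "m2 s \<noteq> 0"
    using sh unfolding shaping_at_crossing_def by auto
  have gW: "e2pi (gW f) = a1 s * e2pi (gN f)"
    using gamma(1) unfolding e2pi_diff by (simp add: field_simps)
  have gS: "e2pi (gS f) = a2 s * a1 s * e2pi (gN f)"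
    using gamma(2) gW unfolding e2pi_diff by (simp add: field_simps)
  have gE: "e2pi (gE f) = a2p s * e2pi (gN f)"
    using gamma(3) unfolding e2pi_diff by (simp add: field_simps)
  note e2pi = e2pi_add e2pi_diff e2pi_of_int_mult fl' gW gS gE kappa
  show "e2pi (theta0 eps f North) = q" "e2pi (theta0 eps f West) = (b2 s / (b1 s * m1 s)) powi eps"
    "e2pi (theta0 eps f South) = (b2 s * m2 s / (b1p s * m1 s)) powi eps"
    "e2pi (theta0 eps f East) = (b2p s * m2 s / b1p s) powi eps"
    unfolding theta0.simps e2pi q_def by (simp_all add: field_simps)
  show "e2pi (theta1 eps f North) = 1 / (1 - q)"
    "e2pi (theta1 eps f West) = m1 s powi eps / (a1 s * (1 - q))"
    "e2pi (theta1 eps f South) = (m1 s / m2 s) powi eps / (a1 s * a2 s * (1 - q))"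
    "e2pi (theta1 eps f East) = 1 / (m2 s powi eps * a2p s * (1 - q))"
    unfolding theta1.simps e2pi
    using \<open>q \<noteq> 1\<close> \<open>a1 s \<noteq> 0\<close> \<open>a2 s \<noteq> 0\<close> \<open>a2p s \<noteq> 0\<close> \<open>m2 s \<noteq> 0\<close>
    by (simp_all add: field_simps power_int_divide_distrib power_int_minus)
qed

lemma dilog_relation:
  assumes sh: "shaping_at_crossing eps s" and fl: "flattening_at_crossing eps s f"
    and np: "\<not> pinched s"
  shows "e2pi (theta1 eps f R) * (1 - e2pi (theta0 eps f R)) = 1"
proof -
  have "a1 s \<noteq> 0" "a2 s \<noteq> 0" "a2p s \<noteq> 0" "m2 s \<noteq> 0"
    using sh unfolding shaping_at_crossing_def by auto
  with shaping_region_identities[OF sh np]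
  have "e2pi (theta1 eps f North) * (1 - e2pi (theta0 eps f North)) = 1"
    "e2pi (theta1 eps f West) * (1 - e2pi (theta0 eps f West)) = 1"
    "e2pi (theta1 eps f South) * (1 - e2pi (theta0 eps f South)) = 1"
    "e2pi (theta1 eps f East) * (1 - e2pi (theta0 eps f East)) = 1"
    unfolding e2pi_theta[OF sh fl np] by (simp_all add: field_simps)
  then show ?thesis by (cases R) simp_all
qed

definition theta_increment :: "int \<Rightarrow> flat_loc \<Rightarrow> flat_loc \<Rightarrow> region \<Rightarrow> complex" where
  "theta_increment eps f f' R =
     (theta1 eps f' R - theta1 eps f R) * theta0 eps f R
     - (theta0 eps f' R - theta0 eps f R) * theta1 eps f R"

lemma Vcross_theta_translate:
  assumes sh: "shaping_at_crossing eps s" and fl: "flattening_at_crossing eps s f"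
    and np: "\<not> pinched s"
    and int0: "\<And>R. theta0 eps f' R - theta0 eps f R \<in> \<int>"
    and int1: "\<And>R. theta1 eps f' R - theta1 eps f R \<in> \<int>"
  shows "cong_2pi2i (Vcross eps s f')
           (Vcross eps s f + 2 * of_real (pi^2) * \<i> * of_int eps *
              (theta_increment eps f f' North - theta_increment eps f f' West
               + theta_increment eps f f' South - theta_increment eps f f' East))"
proof -
  define d where "d R = (Lcal_region eps f' R - Lcal_region eps f R) / of_real (2 * pi^2)
    + theta_increment eps f f' R" for R
  have "d R \<in> \<int>" for R
    unfolding d_def theta_increment_def
    using Lcal_translate[OF dilog_relation[OF sh fl np] int0 int1] .
  moreover have "(Vcross eps s f' - (Vcross eps s f + 2 * of_real (pi^2) * \<i> * of_int eps *
      (theta_increment eps f f' North - theta_increment eps f f' West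
       + theta_increment eps f f' South - theta_increment eps f f' East)))
      / (2 * of_real (pi^2) * \<i>) = - of_int eps * (d North - d West + d South - d East)"
    unfolding Vcross_not_pinched[OF np] d_def by (simp add: field_simps power2_eq_square)
  ultimately show ?thesis unfolding cong_2pi2i_iff_Ints by simp
qed

lemma pinched_shaping:
  assumes sh: "shaping_at_crossing eps s" and p: "pinched s"
  shows "b2 s = m1 s * b1 s" and "b1p s = m2 s * b1 s"
proof -
  have ne: "a1 s \<noteq> 0" "b1 s \<noteq> 0" "b2 s \<noteq> 0" "m1 s \<noteq> 0" "m2 s \<noteq> 0"
    using sh unfolding shaping_at_crossing_def by auto
  have b2p: "b2p s = b1 s" using p unfolding pinched_def .
  have "eps = 1 \<or> eps = -1" using sh unfolding shaping_at_crossing_def by auto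
  then have "b2 s = m1 s * b1 s \<and> b1p s = m2 s * b1 s"
  proof
    assume eps: "eps = 1"
    have rel: "b1p s = m2 s * b2 s / m1 s / (1 - m2 s * a2 s * (1 - b2 s / (m1 s * b1 s)))"
      "b2p s = b1 s * (1 - m1 s / a1 s * (1 - b2 s / (m1 s * b1 s)))"
      using sh eps unfolding shaping_at_crossing_def Let_def by auto
    have "b2 s = m1 s * b1 s" using rel(2) b2p ne by (auto simp: field_simps)
    with rel(1) ne show ?thesis by (simp add: field_simps)
  next
    assume eps: "eps = -1"
    define D where "D = 1 - 1 / (m1 s * a1 s) * (1 - m1 s * b1 s / b2 s)"
    have rel: "b1p s = m2 s * b2 s / m1 s * (1 - a2 s / m2 s * (1 - m1 s * b1 s / b2 s))"
      "b2p s = b1 s / D" "D \<noteq> 0"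
      using sh eps unfolding shaping_at_crossing_def Let_def D_def by auto
    have "D = 1" using rel(2,3) b2p ne by (simp add: field_simps)
    then have "b2 s = m1 s * b1 s" using ne by (auto simp: D_def field_simps)
    with rel(1) ne show ?thesis by (simp add: field_simps)
  qed
  then show "b2 s = m1 s * b1 s" "b1p s = m2 s * b1 s" by auto
qed

lemma pinched_flattening:
  assumes sh: "shaping_at_crossing eps s" and fl: "flattening_at_crossing eps s f"
    and p: "pinched s"
  shows "beta2p f - beta1 f \<in> \<int>" and "beta2 f - (beta1 f + mu1 f) \<in> \<int>"
    and "beta1p f - (beta1 f + mu2 f) \<in> \<int>"
proof -
  have fl': "e2pi (mu1 f) = m1 s" "e2pi (mu2 f) = m2 s" "e2pi (beta1 f) = b1 s"
     "e2pi (beta2 f) = b2 s" "e2pi (beta1p f) = b1p s" "e2pi (beta2p f) = b2p s"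
    using fl unfolding flattening_at_crossing_def by auto
  have "e2pi (beta2p f) = e2pi (beta1 f)" "e2pi (beta2 f) = e2pi (beta1 f + mu1 f)"
    "e2pi (beta1p f) = e2pi (beta1 f + mu2 f)"
    unfolding e2pi_add fl' pinched_shaping[OF sh p] using p by (simp_all add: pinched_def mult.commute)
  then show "beta2p f - beta1 f \<in> \<int>" "beta2 f - (beta1 f + mu1 f) \<in> \<int>"
    "beta1p f - (beta1 f + mu2 f) \<in> \<int>"
    unfolding e2pi_eq_iff_Ints by simp_all
qed

datatype flat_param = Mu1 | Mu2 | Beta1 | Beta2 | Beta1p | Beta2p | GammaN | GammaW | GammaS | GammaE

fun translate :: "flat_param \<Rightarrow> complex \<Rightarrow> flat_loc \<Rightarrow> flat_loc" where
  "translate Mu1 k f = f\<lparr>mu1 := mu1 f + k\<rparr>"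
| "translate Mu2 k f = f\<lparr>mu2 := mu2 f + k\<rparr>"
| "translate Beta1 k f = f\<lparr>beta1 := beta1 f + k\<rparr>"
| "translate Beta2 k f = f\<lparr>beta2 := beta2 f + k\<rparr>"
| "translate Beta1p k f = f\<lparr>beta1p := beta1p f + k\<rparr>"
| "translate Beta2p k f = f\<lparr>beta2p := beta2p f + k\<rparr>"
| "translate GammaN k f = f\<lparr>gN := gN f + k\<rparr>"
| "translate GammaW k f = f\<lparr>gW := gW f + k\<rparr>"
| "translate GammaS k f = f\<lparr>gS := gS f + k\<rparr>"
| "translate GammaE k f = f\<lparr>gE := gE f + k\<rparr>"

fun translation_coeff :: "int \<Rightarrow> flat_param \<Rightarrow> flat_loc \<Rightarrow> complex" where
  "translation_coeff eps Mu1 f = - of_int eps * (beta1p f - beta1 f) + gW f - gS f"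
| "translation_coeff eps Mu2 f = of_int eps * (beta2p f - beta2 f) + gS f - gE f"
| "translation_coeff eps Beta1 f = gW f - gN f - of_int eps * mu1 f"
| "translation_coeff eps Beta2 f = gS f - gW f + of_int eps * mu2 f"
| "translation_coeff eps Beta1p f = gE f - gS f + of_int eps * mu1 f"
| "translation_coeff eps Beta2p f = gN f - gE f - of_int eps * mu2 f"
| "translation_coeff eps GammaN f = beta1 f - beta2p f"
| "translation_coeff eps GammaW f = beta2 f - beta1 f - mu1 f"
| "translation_coeff eps GammaS f = beta1p f + mu1 f - beta2 f - mu2 f"
| "translation_coeff eps GammaE f = beta2p f + mu2 f - beta1p f"

definition pinched_potential :: "int \<Rightarrow> flat_loc \<Rightarrow> complex" where
  "pinched_potential eps f =
    (let e = of_int eps in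
     beta1 f * (gW f - gN f) - beta1p f * (gS f - gE f) + beta2 f * (gS f - gW f) - beta2p f * (gE f - gN f)
     - mu1 f * (e * (beta1 f - beta1p f + mu2 f) + gS f - gW f)
     - mu2 f * (e * (beta2p f - beta2 f + mu1 f) + gE f - gS f))"

lemma Vcross_pinched:
  "pinched s \<Longrightarrow> Vcross eps s f = 2 * of_real (pi^2) * \<i> * pinched_potential eps f"
  unfolding Vcross_def pinched_potential_def Let_def by simp

lemma pinched_potential_translate:
  assumes sh: "shaping_at_crossing eps s" and fl: "flattening_at_crossing eps s f"
    and p: "pinched s"
  shows "pinched_potential eps (translate x (of_int k) f) - pinched_potential eps f
           - of_int k * translation_coeff eps x f \<in> \<int>"
proof -
  define n1 n2 n3 where "n1 = beta2p f - beta1 f" and "n2 = beta2 f - (beta1 f + mu1 f)"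
    and "n3 = beta1p f - (beta1 f + mu2 f)"
  have "n1 \<in> \<int>" "n2 \<in> \<int>" "n3 \<in> \<int>"
    using pinched_flattening[OF sh fl p] by (simp_all add: n1_def n2_def n3_def)
  moreover have beta: "beta2p f = beta1 f + n1" "beta2 f = beta1 f + mu1 f + n2"
    "beta1p f = beta1 f + mu2 f + n3"
    by (simp_all add: n1_def n2_def n3_def)
  ultimately show ?thesis
    by (cases x) (simp_all add: pinched_potential_def Let_def beta algebra_simps)
qed

lemma theta_translate_Ints:
  shows "theta0 eps (translate x (of_int k) f) R - theta0 eps f R \<in> \<int>"
    and "theta1 eps (translate x (of_int k) f) R - theta1 eps f R \<in> \<int>"
  by (cases x; cases R; simp add: algebra_simps)+

lemma theta_increment_translate:
  assumes "eps = 1 \<or> eps = -1"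
  shows "of_int eps * (theta_increment eps f (translate x (of_int k) f) North
      - theta_increment eps f (translate x (of_int k) f) West
      + theta_increment eps f (translate x (of_int k) f) South
      - theta_increment eps f (translate x (of_int k) f) East) = of_int k * translation_coeff eps x f"
  using assms by (cases x; elim disjE; simp add: theta_increment_def algebra_simps)

lemma Vcross_translate:
  assumes sh: "shaping_at_crossing eps s" and fl: "flattening_at_crossing eps s f"
  shows "cong_2pi2i (Vcross eps s (translate x (of_int k) f))
           (Vcross eps s f + 2 * of_real (pi^2) * \<i> * of_int k * translation_coeff eps x f)"
proof (cases "pinched s")
  case True
  have "Vcross eps s (translate x (of_int k) f)
      - (Vcross eps s f + 2 * of_real (pi^2) * \<i> * of_int k * translation_coeff eps x f)
      = 2 * of_real (pi^2) * \<i> * (pinched_potential eps (translate x (of_int k) f)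
          - pinched_potential eps f - of_int k * translation_coeff eps x f)"
    unfolding Vcross_pinched[OF True] by (simp add: algebra_simps)
  with pinched_potential_translate[OF sh fl True] show ?thesis
    unfolding cong_2pi2i_iff_Ints by simp
next
  case False
  have "eps = 1 \<or> eps = -1" using sh unfolding shaping_at_crossing_def by auto
  from Vcross_theta_translate[OF sh fl False theta_translate_Ints]
    theta_increment_translate[OF this, where f = f and x = x and k = k]
  show ?thesis by (metis mult.assoc)
qed

theorem lemma3p7:
  fixes eps k :: int and s :: shape_loc and f :: flat_loc
  assumes "shaping_at_crossing eps s"
    and "flattening_at_crossing eps s f"
  shows
   "let e = (of_int eps :: complex); c = 2 * of_real (pi^2) * \<i> * of_int k; V = Vcross eps s
    in cong_2pi2i (V (f\<lparr>mu1 := mu1 f + of_int k\<rparr>))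
         (V f + c * (- e * (beta1p f - beta1 f) + gW f - gS f)) \<and>
       cong_2pi2i (V (f\<lparr>mu2 := mu2 f + of_int k\<rparr>))
         (V f + c * (e * (beta2p f - beta2 f) + gS f - gE f)) \<and>
       cong_2pi2i (V (f\<lparr>beta1 := beta1 f + of_int k\<rparr>))
         (V f + c * (gW f - gN f - e * mu1 f)) \<and>
       cong_2pi2i (V (f\<lparr>beta2 := beta2 f + of_int k\<rparr>))
         (V f + c * (gS f - gW f + e * mu2 f)) \<and>
       cong_2pi2i (V (f\<lparr>beta1p := beta1p f + of_int k\<rparr>))
         (V f + c * (gE f - gS f + e * mu1 f)) \<and>
       cong_2pi2i (V (f\<lparr>beta2p := beta2p f + of_int k\<rparr>))
         (V f + c * (gN f - gE f - e * mu2 f)) \<and>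
       cong_2pi2i (V (f\<lparr>gN := gN f + of_int k\<rparr>))
         (V f + c * (beta1 f - beta2p f)) \<and>
       cong_2pi2i (V (f\<lparr>gW := gW f + of_int k\<rparr>))
         (V f + c * (beta2 f - beta1 f - mu1 f)) \<and>
       cong_2pi2i (V (f\<lparr>gS := gS f + of_int k\<rparr>))
         (V f + c * (beta1p f + mu1 f - beta2 f - mu2 f)) \<and>
       cong_2pi2i (V (f\<lparr>gE := gE f + of_int k\<rparr>))
         (V f + c * (beta2p f + mu2 f - beta1p f))"
proof -
  have translate_k: "cong_2pi2i (Vcross eps s (translate x (of_int k) f))
      (Vcross eps s f + 2 * of_real (pi^2) * \<i> * of_int k * translation_coeff eps x f)" for x
    using Vcross_translate[OF assms] .
  show ?thesis
    unfolding Let_def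
    using translate_k[of Mu1] translate_k[of Mu2] translate_k[of Beta1] translate_k[of Beta2]
      translate_k[of Beta1p] translate_k[of Beta2p] translate_k[of GammaN] translate_k[of GammaW]
      translate_k[of GammaS] translate_k[of GammaE]
    by simp
qed

end
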